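(* Let $W$ be a standard one-dimensional Brownian motion, $T>0$, and let $f:\mathbb{R}\to\mathbb{R}$ be bounded with ${\rm osc}_f(\delta)\le C\delta^\alpha$ for some $\alpha\in(0,1]$, $C>0$ and all sufficiently small $\delta>0$. Let $(n_\varepsilon)_{\varepsilon>0}$ be positive integers with $n_\varepsilon\nearrow\infty$ as $\varepsilon\to0$, $\delta_\varepsilon=T/n_\varepsilon$, $s_i=i\delta_\varepsilon$ ($i=0,\dots,n_\varepsilon$), $q_\varepsilon=2\sqrt{\delta_\varepsilon|\log\delta_\varepsilon|}$, $i(t)=\min\{j\in\{0,\dots,n_\varepsilon\}:s_j\ge t\}$, and \[ L_{\varepsilon,P_\varepsilon}(t)=\sum_{i=1}^{i(t)}\big(f(\varepsilon W(s_i))-f(\varepsilon W(s_{i-1}))\big)\big(W(s_i)-W(s_{i-1})\big),\qquad t\in[0,T]. \] Then there is a positive constant $K$ such that for any $\delta>0$ and $\varepsilon>0$, \[ \mathsf{P}\Big\{\sup_{t\in[0,T]}|L_{\varepsilon,P_\varepsilon}(t)|>\delta\Big\}\le\mathsf{P}\Big\{|\log\delta_\varepsilon|\,{\rm osc}_f(\varepsilon q_\varepsilon)>\frac{q_\varepsilon\delta}{4T}\Big\}+K\delta_\varepsilon. \] (The first probability on the right is either $0$ or $1$.)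
   Context: ${\rm osc}_f(\delta)=\sup_{|t-s|<\delta}|f(s)-f(t)|$. *)

theory Defs
  imports "HOL-Probability.Probability"
begin

definition std_brownian_motion :: "'a measure \<Rightarrow> (real \<Rightarrow> 'a \<Rightarrow> real) \<Rightarrow> bool" where
  "std_brownian_motion M W \<longleftrightarrow>
     prob_space M \<and>
     (\<forall>t\<ge>0. W t \<in> borel_measurable M) \<and>
     (\<forall>\<omega>\<in>space M. W 0 \<omega> = 0) \<and>
     (\<forall>\<omega>\<in>space M. continuous_on {0..} (\<lambda>t. W t \<omega>)) \<and>
     (\<forall>s t. 0 \<le> s \<and> s < t \<longrightarrow>
        distributed M lborel (\<lambda>\<omega>. W t \<omega> - W s \<omega>)
          (\<lambda>x. ennreal (normal_density 0 (sqrt (t - s)) x))) \<and>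
     (\<forall>(n::nat) (u::nat \<Rightarrow> real). 0 \<le> u 0 \<and> (\<forall>i<n. u i < u (Suc i)) \<longrightarrow>
        prob_space.indep_vars M (\<lambda>_. borel) (\<lambda>i \<omega>. W (u (Suc i)) \<omega> - W (u i) \<omega>) {..<n})"

text \<open>Modulus of oscillation osc_f(d) = sup over |t - s| < d of |f s - f t|
  (the extra 0 only matters for d \<le> 0, where the set of pairs is empty).\<close>
definition osc :: "(real \<Rightarrow> real) \<Rightarrow> real \<Rightarrow> real" where
  "osc f d = Sup ({\<bar>f s - f t\<bar> | s t. \<bar>t - s\<bar> < d} \<union> {0})"

definition grid_index :: "real \<Rightarrow> nat \<Rightarrow> real \<Rightarrow> nat" where
  "grid_index T n t = (LEAST j. j \<le> n \<and> real j * (T / real n) \<ge> t)"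

definition disc_L :: "(real \<Rightarrow> real) \<Rightarrow> (real \<Rightarrow> 'a \<Rightarrow> real) \<Rightarrow> real \<Rightarrow> nat \<Rightarrow> real \<Rightarrow> real \<Rightarrow> 'a \<Rightarrow> real" where
  "disc_L f W T n \<epsilon> t \<omega> =
     (\<Sum>i\<in>{1..grid_index T n t}.
        (f (\<epsilon> * W (real i * (T / real n)) \<omega>) - f (\<epsilon> * W (real (i - 1) * (T / real n)) \<omega>)) *
        (W (real i * (T / real n)) \<omega> - W (real (i - 1) * (T / real n)) \<omega>))"

end

theory Submission imports Defs begin

text \<open>If every grid increment of W is smaller than q = 2 sqrt(d |ln d|) in absolute value,
  each summand of L is at most q osc_f(\<epsilon> q), so sup |L| \<le> N q osc_f(\<epsilon> q), and this is
  at most \<delta> unless the deterministic event on the right-hand side occurs. By the Gaussian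
  tail bound P(|N(0,d)| \<ge> q) \<le> 2 exp(-q^2/(2d)) = 2 d^2 and a union bound over the N = T/d
  increments, some increment exceeds q with probability at most 2 T d.\<close>

lemma normal_density_exp_tilt:
  fixes q s x :: real
  assumes "s > 0"
  shows "normal_density 0 s x * exp (q * x / s\<^sup>2 - q\<^sup>2 / s\<^sup>2)
       = exp (- q\<^sup>2 / (2 * s\<^sup>2)) * normal_density q s x"
proof -
  have "exp (- (x - 0)\<^sup>2 / (2 * s\<^sup>2)) * exp (q * x / s\<^sup>2 - q\<^sup>2 / s\<^sup>2)
      = exp (- q\<^sup>2 / (2 * s\<^sup>2)) * exp (- (x - q)\<^sup>2 / (2 * s\<^sup>2))"
    unfolding exp_add[symmetric] using assms by (simp add: field_simps power2_eq_square)
  then show ?thesis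
    unfolding normal_density_def by (metis (no_types, lifting) mult.assoc mult.left_commute)
qed

lemma nn_integral_normal_density_exp_tilt:
  fixes q s :: real
  assumes s: "s > 0"
  shows "(\<integral>\<^sup>+x. ennreal (normal_density 0 s x * exp (q * x / s\<^sup>2 - q\<^sup>2 / s\<^sup>2)) \<partial>lborel)
       = ennreal (exp (- q\<^sup>2 / (2 * s\<^sup>2)))"
proof -
  have total: "(\<integral>\<^sup>+x. ennreal (normal_density q s x) \<partial>lborel) = 1"
    using s by (subst nn_integral_eq_integral) auto
  have "(\<integral>\<^sup>+x. ennreal (normal_density 0 s x * exp (q * x / s\<^sup>2 - q\<^sup>2 / s\<^sup>2)) \<partial>lborel)
      = (\<integral>\<^sup>+x. ennreal (exp (- q\<^sup>2 / (2 * s\<^sup>2))) * ennreal (normal_density q s x) \<partial>lborel)"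
    by (simp add: normal_density_exp_tilt[OF s] ennreal_mult)
  also have "\<dots> = ennreal (exp (- q\<^sup>2 / (2 * s\<^sup>2)))"
    by (simp add: nn_integral_cmult total)
  finally show ?thesis .
qed

lemma normal_two_sided_tail:
  fixes q s :: real
  assumes s: "s > 0" and q: "q \<ge> 0"
  shows "(\<integral>\<^sup>+x. ennreal (normal_density 0 s x) * indicator {x. q \<le> \<bar>x\<bar>} x \<partial>lborel)
       \<le> ennreal (2 * exp (- q\<^sup>2 / (2 * s\<^sup>2)))"
proof -
  define tilt where "tilt p x = normal_density 0 s x * exp (p * x / s\<^sup>2 - p\<^sup>2 / s\<^sup>2)" for p x
  have tilt_nonneg: "0 \<le> tilt p x" for p x unfolding tilt_def by simp
  \<comment> \<open>Chernoff: on {q \<le> |x|} one of the two tilting factors exp(\<plusminus>q x/s^2 - q^2/s^2) is at least 1.\<close>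
  have indicator_le: "ennreal (normal_density 0 s x) * indicator {x. q \<le> \<bar>x\<bar>} x
      \<le> ennreal (tilt q x) + ennreal (tilt (- q) x)" for x
  proof (cases "q \<le> \<bar>x\<bar>")
    case True
    have "q * q \<le> q * \<bar>x\<bar>" using True q by (rule mult_left_mono)
    then have "q * q \<le> q * x \<or> q * q \<le> - q * x"
      by (cases "x \<ge> 0") auto
    then have "0 \<le> q * x / s\<^sup>2 - q\<^sup>2 / s\<^sup>2 \<or> 0 \<le> (- q) * x / s\<^sup>2 - (- q)\<^sup>2 / s\<^sup>2"
      using s by (auto simp: field_simps power2_eq_square)
    then have "1 \<le> exp (q * x / s\<^sup>2 - q\<^sup>2 / s\<^sup>2) + exp ((- q) * x / s\<^sup>2 - (- q)\<^sup>2 / s\<^sup>2)"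
      by (smt (verit) exp_ge_zero one_le_exp_iff)
    then have "normal_density 0 s x * 1 \<le> tilt q x + tilt (- q) x"
      unfolding tilt_def by (metis distrib_left mult_left_mono normal_density_nonneg)
    then show ?thesis
      using True by (simp add: tilt_nonneg ennreal_plus[symmetric] ennreal_leI del: ennreal_plus)
  qed simp
  have "(\<integral>\<^sup>+x. ennreal (normal_density 0 s x) * indicator {x. q \<le> \<bar>x\<bar>} x \<partial>lborel)
      \<le> (\<integral>\<^sup>+x. ennreal (tilt q x) + ennreal (tilt (- q) x) \<partial>lborel)"
    by (rule nn_integral_mono) (rule indicator_le)
  also have "\<dots> = ennreal (exp (- q\<^sup>2 / (2 * s\<^sup>2))) + ennreal (exp (- (- q)\<^sup>2 / (2 * s\<^sup>2)))"
    using nn_integral_normal_density_exp_tilt[OF s, of q] nn_integral_normal_density_exp_tilt[OF s, of "- q"]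
    unfolding tilt_def by (subst nn_integral_add) simp_all
  also have "\<dots> = ennreal (2 * exp (- q\<^sup>2 / (2 * s\<^sup>2)))"
    by (simp add: ennreal_plus[symmetric] del: ennreal_plus)
  finally show ?thesis .
qed

lemma std_brownian_motion_increment_tail:
  assumes BM: "std_brownian_motion M W" and ab: "0 \<le> a" "a < b" and q: "q \<ge> 0"
  shows "measure M {\<omega> \<in> space M. q \<le> \<bar>W b \<omega> - W a \<omega>\<bar>} \<le> 2 * exp (- q\<^sup>2 / (2 * (b - a)))"
proof -
  interpret prob_space M using BM unfolding std_brownian_motion_def by blast
  have distr: "distributed M lborel (\<lambda>\<omega>. W b \<omega> - W a \<omega>)
      (\<lambda>x. ennreal (normal_density 0 (sqrt (b - a)) x))"
    using BM ab unfolding std_brownian_motion_def by blast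
  have event: "{\<omega> \<in> space M. q \<le> \<bar>W b \<omega> - W a \<omega>\<bar>}
      = (\<lambda>\<omega>. W b \<omega> - W a \<omega>) -` {x. q \<le> \<bar>x\<bar>} \<inter> space M"
    by auto
  have "emeasure M {\<omega> \<in> space M. q \<le> \<bar>W b \<omega> - W a \<omega>\<bar>}
      = (\<integral>\<^sup>+x. ennreal (normal_density 0 (sqrt (b - a)) x) * indicator {x. q \<le> \<bar>x\<bar>} x \<partial>lborel)"
    unfolding event by (rule distributed_emeasure[OF distr]) measurable
  also have "\<dots> \<le> ennreal (2 * exp (- q\<^sup>2 / (2 * (sqrt (b - a))\<^sup>2)))"
    using ab q by (intro normal_two_sided_tail) auto
  finally show ?thesis
    using ab by (simp add: emeasure_eq_measure)
qed

lemma std_brownian_motion_grid_increments_tail: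
  assumes BM: "std_brownian_motion M W" and d: "d > 0" and q: "q \<ge> 0"
  shows "measure M {\<omega> \<in> space M. \<exists>i\<in>{1..N}. q \<le> \<bar>W (real i * d) \<omega> - W (real (i - 1) * d) \<omega>\<bar>}
       \<le> 2 * real N * exp (- q\<^sup>2 / (2 * d))"
proof -
  interpret prob_space M using BM unfolding std_brownian_motion_def by blast
  define E where "E i = {\<omega> \<in> space M. q \<le> \<bar>W (real i * d) \<omega> - W (real (i - 1) * d) \<omega>\<bar>}" for i :: nat
  have E_sets: "E i \<in> sets M" for i
  proof -
    have "W (real i * d) \<in> borel_measurable M" "W (real (i - 1) * d) \<in> borel_measurable M"
      using BM d unfolding std_brownian_motion_def by auto
    then show ?thesis unfolding E_def by measurable
  qed
  have E_measure: "measure M (E i) \<le> 2 * exp (- q\<^sup>2 / (2 * d))" if "i \<ge> 1" for i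
  proof -
    have step: "real i * d - real (i - 1) * d = d"
      using that by (simp add: of_nat_diff algebra_simps)
    have "measure M (E i) \<le> 2 * exp (- q\<^sup>2 / (2 * (real i * d - real (i - 1) * d)))"
      unfolding E_def by (rule std_brownian_motion_increment_tail[OF BM]) (use d q that step in auto)
    then show ?thesis unfolding step .
  qed
  have "{\<omega> \<in> space M. \<exists>i\<in>{1..N}. q \<le> \<bar>W (real i * d) \<omega> - W (real (i - 1) * d) \<omega>\<bar>} = (\<Union>i\<in>{1..N}. E i)"
    unfolding E_def by auto
  also have "measure M \<dots> \<le> (\<Sum>i\<in>{1..N}. measure M (E i))"
    by (rule measure_UNION_le) (auto intro: E_sets)
  also have "\<dots> \<le> (\<Sum>i\<in>{1..N}. 2 * exp (- q\<^sup>2 / (2 * d)))"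
    by (rule sum_mono) (use E_measure in auto)
  finally show ?thesis by simp
qed

lemma bdd_above_osc_set:
  fixes f :: "real \<Rightarrow> real"
  assumes "bounded (range f)"
  shows "bdd_above ({\<bar>f s - f t\<bar> | s t. \<bar>t - s\<bar> < d} \<union> {0})"
proof -
  obtain B where B: "\<And>x. \<bar>f x\<bar> \<le> B" using assms unfolding bounded_iff by auto
  have "\<bar>f s - f t\<bar> \<le> 2 * B" for s t using B[of s] B[of t] by linarith
  then show ?thesis
    using B[of 0] by (intro bdd_aboveI[where M = "2 * B"]) auto
qed

lemma osc_nonneg: "bounded (range f) \<Longrightarrow> 0 \<le> osc f d"
  unfolding osc_def by (rule cSup_upper[OF _ bdd_above_osc_set]) auto

lemma abs_diff_le_osc: "bounded (range f) \<Longrightarrow> \<bar>t - s\<bar> < d \<Longrightarrow> \<bar>f s - f t\<bar> \<le> osc f d"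
  unfolding osc_def by (rule cSup_upper[OF _ bdd_above_osc_set]) auto

lemma grid_index_le: "N > 0 \<Longrightarrow> t \<le> T \<Longrightarrow> grid_index T N t \<le> N"
  unfolding grid_index_def by (rule Least_le) auto

lemma abs_disc_L_le:
  assumes f: "bounded (range f)" and N: "N > 0" and \<epsilon>: "\<epsilon> > 0" and t: "t \<le> T"
    and small: "\<forall>i\<in>{1..N}. \<bar>W (real i * (T / real N)) \<omega> - W (real (i - 1) * (T / real N)) \<omega>\<bar> < q"
  shows "\<bar>disc_L f W T N \<epsilon> t \<omega>\<bar> \<le> real N * q * osc f (\<epsilon> * q)"
proof -
  define w where "w i = W (real i * (T / real N)) \<omega>" for i :: nat
  have summand_le: "\<bar>(f (\<epsilon> * w i) - f (\<epsilon> * w (i - 1))) * (w i - w (i - 1))\<bar> \<le> osc f (\<epsilon> * q) * q"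
    if "i \<in> {1..N}" for i
  proof -
    have inc: "\<bar>w i - w (i - 1)\<bar> < q" using small that unfolding w_def by blast
    then have "\<bar>\<epsilon> * w (i - 1) - \<epsilon> * w i\<bar> < \<epsilon> * q"
      using \<epsilon> by (simp add: abs_mult right_diff_distrib[symmetric] abs_minus_commute)
    then have "\<bar>f (\<epsilon> * w i) - f (\<epsilon> * w (i - 1))\<bar> \<le> osc f (\<epsilon> * q)"
      by (rule abs_diff_le_osc[OF f])
    then show ?thesis
      using inc unfolding abs_mult by (intro mult_mono) auto
  qed
  have q: "q \<ge> 0" using small N by force
  have index: "grid_index T N t \<le> N" using grid_index_le N t .
  have "\<bar>disc_L f W T N \<epsilon> t \<omega>\<bar> \<le> (\<Sum>i\<in>{1..grid_index T N t}. osc f (\<epsilon> * q) * q)"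
    unfolding disc_L_def w_def[symmetric]
    by (rule order_trans[OF sum_abs sum_mono]) (use summand_le index in auto)
  also have "\<dots> \<le> (\<Sum>i\<in>{1..N}. osc f (\<epsilon> * q) * q)"
    by (rule sum_mono2) (use index osc_nonneg[OF f] q in auto)
  finally show ?thesis by (simp add: ac_simps)
qed

lemma measure_sup_disc_L_gt_le_of_osc_small:
  assumes BM: "std_brownian_motion M W" and T: "T > 0" and f: "bounded (range f)"
    and N: "N > 0" and \<epsilon>: "\<epsilon> > 0"
    and d: "d = T / real N" "d < 1" and q: "q = 2 * sqrt (d * \<bar>ln d\<bar>)"
    and osc_small: "\<bar>ln d\<bar> * osc f (\<epsilon> * q) \<le> q * \<delta> / (4 * T)"
  shows "measure M {\<omega> \<in> space M. (SUP t\<in>{0..T}. \<bar>disc_L f W T N \<epsilon> t \<omega>\<bar>) > \<delta>} \<le> 2 * T * d"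
proof -
  interpret prob_space M using BM unfolding std_brownian_motion_def by blast
  define Jump where "Jump = {\<omega> \<in> space M. \<exists>i\<in>{1..N}. q \<le> \<bar>W (real i * d) \<omega> - W (real (i - 1) * d) \<omega>\<bar>}"
  have d_pos: "d > 0" using d T N by simp
  have Jump_sets: "Jump \<in> sets M"
  proof -
    have [measurable]: "W (real i * d) \<in> borel_measurable M" for i
      using BM d_pos unfolding std_brownian_motion_def by auto
    show ?thesis unfolding Jump_def by measurable
  qed
  have ln_d: "\<bar>ln d\<bar> > 0" using d d_pos by simp
  have q_pos: "q > 0" unfolding q using ln_d d_pos by simp
  have q_sq: "q\<^sup>2 = 4 * (d * \<bar>ln d\<bar>)" unfolding q using d_pos by (simp add: power_mult_distrib)
  have Nd: "real N * d = T" using d N by simp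
  have bound_le: "real N * q * osc f (\<epsilon> * q) \<le> \<delta>"
  proof -
    have "real N * q * osc f (\<epsilon> * q) \<le> real N * q * (q * \<delta> / (4 * T * \<bar>ln d\<bar>))"
      using osc_small ln_d T q_pos by (intro mult_left_mono) (auto simp: field_simps)
    also have "\<dots> = real N * q\<^sup>2 * \<delta> / (4 * T * \<bar>ln d\<bar>)" by (simp add: power2_eq_square)
    also have "\<dots> = \<delta>"
      unfolding q_sq Nd[symmetric] using ln_d N d_pos by (simp add: field_simps)
    finally show ?thesis .
  qed
  have "{\<omega> \<in> space M. (SUP t\<in>{0..T}. \<bar>disc_L f W T N \<epsilon> t \<omega>\<bar>) > \<delta>} \<subseteq> Jump"
  proof (rule subsetI, rule ccontr)
    fix \<omega> assume \<omega>: "\<omega> \<in> {\<omega> \<in> space M. (SUP t\<in>{0..T}. \<bar>disc_L f W T N \<epsilon> t \<omega>\<bar>) > \<delta>}" "\<omega> \<notin> Jump"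
    then have small: "\<forall>i\<in>{1..N}. \<bar>W (real i * (T / real N)) \<omega> - W (real (i - 1) * (T / real N)) \<omega>\<bar> < q"
      unfolding Jump_def d(1) by force
    have "(SUP t\<in>{0..T}. \<bar>disc_L f W T N \<epsilon> t \<omega>\<bar>) \<le> \<delta>"
      using T abs_disc_L_le[where W = W and T = T and \<omega> = \<omega> and q = q, OF f N \<epsilon> _ small] bound_le
      by (intro cSUP_least) (auto intro: order_trans)
    then show False using \<omega> by auto
  qed
  then have "measure M {\<omega> \<in> space M. (SUP t\<in>{0..T}. \<bar>disc_L f W T N \<epsilon> t \<omega>\<bar>) > \<delta>} \<le> measure M Jump"
    by (rule finite_measure_mono[OF _ Jump_sets])
  also have "\<dots> \<le> 2 * real N * exp (- q\<^sup>2 / (2 * d))"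
    unfolding Jump_def using d_pos q_pos by (intro std_brownian_motion_grid_increments_tail[OF BM]) auto
  also have "exp (- q\<^sup>2 / (2 * d)) = d\<^sup>2"
  proof -
    have "exp (- q\<^sup>2 / (2 * d)) = exp (2 * ln d)" using d(2) d_pos by (simp add: q_sq)
    also have "exp (2 * ln d) = exp (ln d) * exp (ln d)" by (metis mult_2 exp_add)
    finally show ?thesis using d_pos by (simp add: power2_eq_square)
  qed
  also have "2 * real N * d\<^sup>2 = 2 * T * d" using Nd by (simp add: power2_eq_square)
  finally show ?thesis .
qed

lemma measure_sup_disc_L_gt_le:
  assumes BM: "std_brownian_motion M W" and T: "T > 0" and f: "bounded (range f)"
    and N: "N > 0" and \<epsilon>: "\<epsilon> > 0"
    and d: "d = T / real N" and q: "q = 2 * sqrt (d * \<bar>ln d\<bar>)"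
  shows "measure M {\<omega> \<in> space M. (SUP t\<in>{0..T}. \<bar>disc_L f W T N \<epsilon> t \<omega>\<bar>) > \<delta>}
       \<le> measure M {\<omega> \<in> space M. \<bar>ln d\<bar> * osc f (\<epsilon> * q) > q * \<delta> / (4 * T)} + (1 + 2 * T) * d"
    (is "measure M ?A \<le> measure M ?B + _")
proof -
  interpret prob_space M using BM unfolding std_brownian_motion_def by blast
  have d_pos: "d > 0" using T N d by simp
  show ?thesis
  proof (cases "d < 1 \<and> \<not> \<bar>ln d\<bar> * osc f (\<epsilon> * q) > q * \<delta> / (4 * T)")
    case True
    then have "measure M ?A \<le> 2 * T * d"
      using d q by (intro measure_sup_disc_L_gt_le_of_osc_small[OF BM T f N \<epsilon>]) auto
    then show ?thesis unfolding ring_distribs using d_pos measure_nonneg[of M ?B] by linarith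
  next
    case trivial: False
    \<comment> \<open>Either the deterministic event ?B is the whole space, or d \<ge> 1; both make the bound at least 1.\<close>
    have "1 \<le> measure M ?B + (1 + 2 * T) * d"
    proof (cases "d < 1")
      case True
      with trivial have "?B = space M" by auto
      then show ?thesis using T d_pos by (simp add: prob_space)
    next
      case False
      have "0 \<le> 2 * T * d" using T d_pos by simp
      then show ?thesis unfolding ring_distribs using False measure_nonneg[of M ?B] by linarith
    qed
    then show ?thesis using prob_le_1[of ?A] by linarith
  qed
qed

theorem lemma3:
  fixes M :: "'a measure" and W :: "real \<Rightarrow> 'a \<Rightarrow> real"
    and T C \<alpha> :: real and f :: "real \<Rightarrow> real" and n :: "real \<Rightarrow> nat"
  assumes BM: "std_brownian_motion M W"
    and T: "T > 0"
    and f_bdd: "bounded (range f)"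
    and alpha: "0 < \<alpha>" "\<alpha> \<le> 1" and C: "C > 0"
    and osc_hoelder: "\<exists>d0>0. \<forall>d. 0 < d \<and> d < d0 \<longrightarrow> osc f d \<le> C * d powr \<alpha>"
    and n_pos: "\<And>\<epsilon>. \<epsilon> > 0 \<Longrightarrow> n \<epsilon> > 0"
    and n_mono: "\<And>\<epsilon>1 \<epsilon>2. 0 < \<epsilon>1 \<Longrightarrow> \<epsilon>1 \<le> \<epsilon>2 \<Longrightarrow> n \<epsilon>2 \<le> n \<epsilon>1"
    and n_lim: "filterlim n at_top (at_right 0)"
  shows "\<exists>K>0. \<forall>\<delta>>0. \<forall>\<epsilon>>0.
     (let d\<epsilon> = T / real (n \<epsilon>); q\<epsilon> = 2 * sqrt (d\<epsilon> * \<bar>ln d\<epsilon>\<bar>) in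
      measure M {\<omega> \<in> space M. (SUP t\<in>{0..T}. \<bar>disc_L f W T (n \<epsilon>) \<epsilon> t \<omega>\<bar>) > \<delta>}
        \<le> measure M {\<omega> \<in> space M. \<bar>ln d\<epsilon>\<bar> * osc f (\<epsilon> * q\<epsilon>) > q\<epsilon> * \<delta> / (4 * T)}
           + K * d\<epsilon>)"
  using T
  by (unfold Let_def, intro exI[of _ "1 + 2 * T"] conjI allI impI
      measure_sup_disc_L_gt_le[OF BM T f_bdd n_pos]) auto

end
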